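(* For every formula $F$ of $\mathcal{L}$: if $F$ is valid in every neighbourhood model, then $F$ is derivable in the axiom system of $\mathbb{PCL}$.
   Context: Formulas: $\mathcal{L} ::= p \mid \bot \mid A\wedge B \mid A\lor B \mid A\rightarrow B \mid A>B$. The axiom system of $\mathbb{PCL}$ is classical propositional logic plus the rules (RCEA) from $A\leftrightarrow B$ infer $(A>C)\leftrightarrow(B>C)$; (RCK) from $A\rightarrow B$ infer $(C>A)\rightarrow(C>B)$, and the axioms (ID) $A>A$; (R-And) $(A>B)\wedge(A>C)\rightarrow(A>(B\wedge C))$; (CM) $(A>B)\wedge(A>C)\rightarrow((A\wedge B)>C)$; (OR) $(A>C)\wedge(B>C)\rightarrow((A\lor B)>C)$. A neighbourhood model is $\langle W,N,\llbracket\cdot\rrbracket\rangle$ with $W\neq\emptyset$, $N:W\to\mathcal{P}(\mathcal{P}(W))$ such that every $\alpha\in N(x)$ is non-empty, and a valuation of atoms. Forcing is classical for Boolean connectives, and $x\Vdash A>B$ iff for all $\alpha\in N(x)$, if some $y\in\alpha$ forces $A$, then there is $\beta\in N(x)$ with $\beta\subseteq\alpha$ such that some $y\in\beta$ forces $A$ and every $y\in\beta$ forces $A\to B$. Valid = forced at every world. *)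

theory Defs
  imports Main
begin

datatype 'a fm =
    Atom 'a
  | Bot
  | And "'a fm" "'a fm"
  | Or "'a fm" "'a fm"
  | Imp "'a fm" "'a fm"
  | Cond "'a fm" "'a fm"

definition Iff :: "'a fm \<Rightarrow> 'a fm \<Rightarrow> 'a fm" where
  "Iff A B = And (Imp A B) (Imp B A)"

fun peval :: "('a fm \<Rightarrow> bool) \<Rightarrow> 'a fm \<Rightarrow> bool" where
  "peval v (Atom p) = v (Atom p)"
| "peval v Bot = False"
| "peval v (And A B) = (peval v A \<and> peval v B)"
| "peval v (Or A B) = (peval v A \<or> peval v B)"
| "peval v (Imp A B) = (peval v A \<longrightarrow> peval v B)"
| "peval v (Cond A B) = v (Cond A B)"

definition tautology :: "'a fm \<Rightarrow> bool" where
  "tautology A \<longleftrightarrow> (\<forall>v. peval v A)"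

inductive PCL :: "'a fm \<Rightarrow> bool" where
  Taut: "tautology A \<Longrightarrow> PCL A"
| MP: "PCL (Imp A B) \<Longrightarrow> PCL A \<Longrightarrow> PCL B"
| RCEA: "PCL (Iff A B) \<Longrightarrow> PCL (Iff (Cond A C) (Cond B C))"
| RCK: "PCL (Imp A B) \<Longrightarrow> PCL (Imp (Cond C A) (Cond C B))"
| ID: "PCL (Cond A A)"
| RAnd: "PCL (Imp (And (Cond A B) (Cond A C)) (Cond A (And B C)))"
| CM: "PCL (Imp (And (Cond A B) (Cond A C)) (Cond (And A B) C))"
| OR: "PCL (Imp (And (Cond A C) (Cond B C)) (Cond (Or A B) C))"

definition nbhd_model :: "'w set \<Rightarrow> ('w \<Rightarrow> 'w set set) \<Rightarrow> ('a \<Rightarrow> 'w set) \<Rightarrow> bool" where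
  "nbhd_model W N V \<longleftrightarrow>
     W \<noteq> {} \<and>
     (\<forall>x\<in>W. \<forall>\<alpha>\<in>N x. \<alpha> \<noteq> {} \<and> \<alpha> \<subseteq> W) \<and>
     (\<forall>p. V p \<subseteq> W)"

fun forces :: "('w \<Rightarrow> 'w set set) \<Rightarrow> ('a \<Rightarrow> 'w set) \<Rightarrow> 'w \<Rightarrow> 'a fm \<Rightarrow> bool" where
  "forces N V x (Atom p) = (x \<in> V p)"
| "forces N V x Bot = False"
| "forces N V x (And A B) = (forces N V x A \<and> forces N V x B)"
| "forces N V x (Or A B) = (forces N V x A \<or> forces N V x B)"
| "forces N V x (Imp A B) = (forces N V x A \<longrightarrow> forces N V x B)"
| "forces N V x (Cond A B) =
     (\<forall>\<alpha>\<in>N x. (\<exists>y\<in>\<alpha>. forces N V y A) \<longrightarrow>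
        (\<exists>\<beta>\<in>N x. \<beta> \<subseteq> \<alpha> \<and> (\<exists>y\<in>\<beta>. forces N V y A) \<and>
                   (\<forall>y\<in>\<beta>. forces N V y A \<longrightarrow> forces N V y B)))"

definition valid_in :: "'w set \<Rightarrow> ('w \<Rightarrow> 'w set set) \<Rightarrow> ('a \<Rightarrow> 'w set) \<Rightarrow> 'a fm \<Rightarrow> bool" where
  "valid_in W N V A \<longleftrightarrow> (\<forall>x\<in>W. forces N V x A)"

end

theory Submission
  imports Defs
begin

(* Completeness via a canonical neighbourhood model.  Worlds are pairs (m, a) of a maximal
   consistent set m and a formula a; the pair is normal for x if m contains every B with a > B in x.
   Tagging m with a lets the same set act as a normal world for several antecedents.  Writing
   d \<preceq> a for d \<or> a > d \<in> x, the neighbourhood of x generated by a normal (m, a) consists of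
   (m, a) and all normal (k, d) with d \<preceq> a and a \<notin> k.  The axioms make \<preceq> transitive.
   If A > B \<in> x and such a neighbourhood meets A, then either a \<preceq> A, and all its A-worlds
   contain B, or some normal (A \<or> a)-world contains A but not a and generates a smaller
   neighbourhood whose A-worlds contain B.  If A > B \<notin> x, a normal A-world without B generates
   a neighbourhood whose only A-world is that world. *)

section \<open>Propositional reasoning in PCL\<close>

fun conjs :: "'a fm list \<Rightarrow> 'a fm" where
  "conjs [] = Imp Bot Bot"
| "conjs (B # L) = And B (conjs L)"

lemma peval_conjs [simp]: "peval v (conjs L) = (\<forall>B\<in>set L. peval v B)"
  by (induction L) auto

lemma peval_Iff [simp]: "peval v (Iff A B) = (peval v A = peval v B)"
  by (auto simp: Iff_def)

lemma PCL_taut: "(\<And>v. peval v A) \<Longrightarrow> PCL A"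
  by (rule PCL.Taut) (simp add: tautology_def)

lemma PCL_taut_consequence:
  assumes "PCL X" and "\<And>v. peval v X \<Longrightarrow> peval v Z"
  shows "PCL Z"
  using PCL_taut[of "Imp X Z"] assms by (auto intro: PCL.MP)

lemma PCL_taut_consequence2:
  assumes "PCL X" and "PCL Y" and "\<And>v. peval v X \<Longrightarrow> peval v Y \<Longrightarrow> peval v Z"
  shows "PCL Z"
  using PCL_taut[of "Imp X (Imp Y Z)"] assms by (auto intro: PCL.MP)

section \<open>Maximal consistent sets\<close>

definition derivable :: "'a fm set \<Rightarrow> 'a fm \<Rightarrow> bool" where
  "derivable G A \<longleftrightarrow> (\<exists>L. set L \<subseteq> G \<and> PCL (Imp (conjs L) A))"

definition consistent :: "'a fm set \<Rightarrow> bool" where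
  "consistent G \<longleftrightarrow> \<not> derivable G Bot"

definition mcs :: "'a fm set \<Rightarrow> bool" where
  "mcs G \<longleftrightarrow> consistent G \<and> (\<forall>A. A \<notin> G \<longrightarrow> \<not> consistent (insert A G))"

lemma derivable_insert_Bot:
  assumes "derivable (insert A G) Bot"
  shows "derivable G (Imp A Bot)"
proof -
  obtain L where L: "set L \<subseteq> insert A G" "PCL (Imp (conjs L) Bot)"
    using assms unfolding derivable_def by blast
  have "set (filter (\<lambda>B. B \<noteq> A) L) \<subseteq> G" using L(1) by auto
  moreover have "PCL (Imp (conjs (filter (\<lambda>B. B \<noteq> A) L)) (Imp A Bot))"
    using L(2) by (rule PCL_taut_consequence) auto
  ultimately show ?thesis unfolding derivable_def by blast
qed

lemma derivable_mp:
  assumes "derivable G A" and "derivable G (Imp A B)"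
  shows "derivable G B"
proof -
  obtain L1 L2 where L1: "set L1 \<subseteq> G" "PCL (Imp (conjs L1) A)"
    and L2: "set L2 \<subseteq> G" "PCL (Imp (conjs L2) (Imp A B))"
    using assms unfolding derivable_def by blast
  from L1(2) L2(2) have "PCL (Imp (conjs (L1 @ L2)) B)"
    by (rule PCL_taut_consequence2) auto
  with L1(1) L2(1) show ?thesis unfolding derivable_def
    by (intro exI[of _ "L1 @ L2"]) auto
qed

lemma mcs_derivable:
  assumes "mcs G" and "derivable G A"
  shows "A \<in> G"
proof (rule ccontr)
  assume "A \<notin> G"
  with assms(1) have "derivable G (Imp A Bot)"
    unfolding mcs_def consistent_def by (blast intro: derivable_insert_Bot)
  with assms show False
    unfolding mcs_def consistent_def by (blast intro: derivable_mp)
qed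

lemma mcs_taut_closed:
  assumes "mcs G" and "set L \<subseteq> G" and "\<And>v. \<forall>B\<in>set L. peval v B \<Longrightarrow> peval v A"
  shows "A \<in> G"
proof -
  have "PCL (Imp (conjs L) A)" using assms(3) by (intro PCL_taut) auto
  with assms(2) have "derivable G A" unfolding derivable_def by blast
  with assms(1) show ?thesis by (rule mcs_derivable)
qed

lemma mcs_PCL:
  assumes "mcs G" and "PCL A"
  shows "A \<in> G"
proof -
  have "PCL (Imp (conjs []) A)" using assms(2) by (rule PCL_taut_consequence) simp
  then have "derivable G A" unfolding derivable_def by (metis empty_set empty_subsetI)
  with assms(1) show ?thesis by (rule mcs_derivable)
qed

lemma mcs_PCL_mp: "mcs G \<Longrightarrow> PCL (Imp A B) \<Longrightarrow> A \<in> G \<Longrightarrow> B \<in> G"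
  by (rule mcs_taut_closed[of _ "[Imp A B, A]"]) (auto intro: mcs_PCL)

lemma mcs_Bot:
  assumes "mcs G"
  shows "Bot \<notin> G"
proof
  assume "Bot \<in> G"
  moreover have "PCL (Imp (conjs [Bot]) Bot)" by (rule PCL_taut) simp
  ultimately have "derivable G Bot" unfolding derivable_def by (intro exI[of _ "[Bot]"]) simp
  with assms show False unfolding mcs_def consistent_def by blast
qed

lemma mcs_Not:
  assumes "mcs G"
  shows "Imp A Bot \<in> G \<longleftrightarrow> A \<notin> G"
proof
  assume "Imp A Bot \<in> G"
  then have "Bot \<in> G" if "A \<in> G"
    using assms that by (intro mcs_taut_closed[of _ "[A, Imp A Bot]"]) auto
  with assms show "A \<notin> G" by (auto simp: mcs_Bot)
next
  assume "A \<notin> G"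
  with assms have "derivable G (Imp A Bot)"
    unfolding mcs_def consistent_def by (blast intro: derivable_insert_Bot)
  with assms show "Imp A Bot \<in> G" by (rule mcs_derivable)
qed

lemma mcs_And:
  assumes "mcs G"
  shows "And A B \<in> G \<longleftrightarrow> A \<in> G \<and> B \<in> G"
proof
  assume AB: "And A B \<in> G"
  have "A \<in> G" by (rule mcs_taut_closed[OF assms, of "[And A B]"]) (use AB in auto)
  moreover have "B \<in> G" by (rule mcs_taut_closed[OF assms, of "[And A B]"]) (use AB in auto)
  ultimately show "A \<in> G \<and> B \<in> G" ..
next
  assume "A \<in> G \<and> B \<in> G"
  then show "And A B \<in> G" by (intro mcs_taut_closed[OF assms, of "[A, B]"]) auto
qed

lemma mcs_Or:
  assumes "mcs G"
  shows "Or A B \<in> G \<longleftrightarrow> A \<in> G \<or> B \<in> G"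
proof
  assume AB: "Or A B \<in> G"
  have "Bot \<in> G" if "Imp A Bot \<in> G" "Imp B Bot \<in> G"
    by (rule mcs_taut_closed[OF assms, of "[Or A B, Imp A Bot, Imp B Bot]"]) (use AB that in auto)
  then show "A \<in> G \<or> B \<in> G" by (auto simp: mcs_Bot[OF assms] mcs_Not[OF assms])
next
  assume "A \<in> G \<or> B \<in> G"
  then show "Or A B \<in> G"
  proof
    assume "A \<in> G"
    then show ?thesis by (intro mcs_taut_closed[OF assms, of "[A]"]) auto
  next
    assume "B \<in> G"
    then show ?thesis by (intro mcs_taut_closed[OF assms, of "[B]"]) auto
  qed
qed

lemma mcs_Imp:
  assumes "mcs G"
  shows "Imp A B \<in> G \<longleftrightarrow> (A \<in> G \<longrightarrow> B \<in> G)"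
proof
  assume AB: "Imp A B \<in> G"
  show "A \<in> G \<longrightarrow> B \<in> G"
  proof
    assume "A \<in> G"
    then show "B \<in> G" by (intro mcs_taut_closed[OF assms, of "[Imp A B, A]"]) (use AB in auto)
  qed
next
  assume AB: "A \<in> G \<longrightarrow> B \<in> G"
  show "Imp A B \<in> G"
  proof (cases "A \<in> G")
    case True
    with AB show ?thesis by (intro mcs_taut_closed[OF assms, of "[B]"]) auto
  next
    case False
    then have "Imp A Bot \<in> G" by (simp add: mcs_Not[OF assms])
    then show ?thesis by (intro mcs_taut_closed[OF assms, of "[Imp A Bot]"]) auto
  qed
qed

lemma consistent_Union_chain:
  assumes "C \<noteq> {}" and "subset.chain {D. consistent D} C"
  shows "consistent (\<Union>C)"
  unfolding consistent_def derivable_def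
proof
  assume "\<exists>L. set L \<subseteq> \<Union>C \<and> PCL (Imp (conjs L) Bot)"
  then obtain L where L: "set L \<subseteq> \<Union>C" "PCL (Imp (conjs L) Bot)" by blast
  then obtain D where "D \<in> C" "set L \<subseteq> D"
    using finite_subset_Union_chain[OF _ _ assms(1,2)] by blast
  with assms(2) L(2) show False
    unfolding subset_chain_def consistent_def derivable_def by blast
qed

lemma lindenbaum:
  assumes "consistent G"
  obtains M where "mcs M" and "G \<subseteq> M"
proof -
  let ?A = "{D. G \<subseteq> D \<and> consistent D}"
  have "\<exists>M\<in>?A. \<forall>X\<in>?A. M \<subseteq> X \<longrightarrow> X = M"
  proof (rule subset_Zorn_nonempty)
    show "?A \<noteq> {}" using assms by blast
    show "\<Union>C \<in> ?A" if "C \<noteq> {}" and "subset.chain ?A C" for C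
      using that consistent_Union_chain[of C] unfolding subset_chain_def by blast
  qed
  then obtain M where "M \<in> ?A" and "\<forall>X\<in>?A. M \<subseteq> X \<longrightarrow> X = M" by blast
  then have "mcs M" unfolding mcs_def by blast
  with \<open>M \<in> ?A\<close> show ?thesis using that by blast
qed

lemma mcs_refuting:
  assumes "\<not> PCL F"
  shows "\<exists>G. mcs G \<and> F \<notin> G"
proof -
  have "consistent {Imp F Bot}" unfolding consistent_def derivable_def
  proof
    assume "\<exists>L. set L \<subseteq> {Imp F Bot} \<and> PCL (Imp (conjs L) Bot)"
    then obtain L where L: "set L \<subseteq> {Imp F Bot}" "PCL (Imp (conjs L) Bot)" by blast
    from L(2) have "PCL F"
      by (rule PCL_taut_consequence) (use L(1) in \<open>fastforce dest: subsetD\<close>)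
    with assms show False ..
  qed
  then obtain G where "mcs G" "Imp F Bot \<in> G" by (rule lindenbaum) blast
  then show ?thesis by (auto simp: mcs_Not)
qed

section \<open>Conditional reasoning in a maximal consistent set\<close>

(* d is at least as plausible as a: the normal (d \<or> a)-worlds are d-worlds. *)
definition plaus_le :: "'a fm set \<Rightarrow> 'a fm \<Rightarrow> 'a fm \<Rightarrow> bool" where
  "plaus_le x d a \<longleftrightarrow> Cond (Or d a) d \<in> x"

definition normal_mcs :: "'a fm set \<Rightarrow> 'a fm \<Rightarrow> 'a fm set set" where
  "normal_mcs x a = {k. mcs k \<and> (\<forall>B. Cond a B \<in> x \<longrightarrow> B \<in> k)}"

context
  fixes x :: "'a fm set"
  assumes mcs_x: "mcs x"
begin

lemma Cond_refl: "Cond A A \<in> x"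
  by (rule mcs_PCL[OF mcs_x PCL.ID])

lemma Cond_mono:
  assumes "Cond A B \<in> x" and "\<And>v. peval v B \<Longrightarrow> peval v C"
  shows "Cond A C \<in> x"
proof -
  have "PCL (Imp B C)" using assms(2) by (intro PCL_taut) auto
  then have "PCL (Imp (Cond A B) (Cond A C))" by (rule PCL.RCK)
  then show ?thesis using assms(1) by (rule mcs_PCL_mp[OF mcs_x])
qed

lemma Cond_cong_ant:
  assumes "Cond A C \<in> x" and "\<And>v. peval v A = peval v A'"
  shows "Cond A' C \<in> x"
proof -
  have "PCL (Iff A A')" using assms(2) by (intro PCL_taut) auto
  then have "PCL (Iff (Cond A C) (Cond A' C))" by (rule PCL.RCEA)
  then have "PCL (Imp (Cond A C) (Cond A' C))" by (rule PCL_taut_consequence) auto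
  then show ?thesis using assms(1) by (rule mcs_PCL_mp[OF mcs_x])
qed

lemma Cond_conj: "Cond A B \<in> x \<Longrightarrow> Cond A C \<in> x \<Longrightarrow> Cond A (And B C) \<in> x"
  using mcs_PCL[OF mcs_x PCL.RAnd] by (simp add: mcs_Imp[OF mcs_x] mcs_And[OF mcs_x])

lemma Cond_cautious_mono: "Cond A B \<in> x \<Longrightarrow> Cond A C \<in> x \<Longrightarrow> Cond (And A B) C \<in> x"
  using mcs_PCL[OF mcs_x PCL.CM] by (simp add: mcs_Imp[OF mcs_x] mcs_And[OF mcs_x])

lemma Cond_disj: "Cond A C \<in> x \<Longrightarrow> Cond B C \<in> x \<Longrightarrow> Cond (Or A B) C \<in> x"
  using mcs_PCL[OF mcs_x PCL.OR] by (simp add: mcs_Imp[OF mcs_x] mcs_And[OF mcs_x])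

lemma Cond_conjs: "set L \<subseteq> {B. Cond A B \<in> x} \<Longrightarrow> Cond A (conjs L) \<in> x"
proof (induction L)
  case Nil
  show ?case using Cond_refl by (rule Cond_mono) simp
next
  case (Cons B L)
  then show ?case using Cond_conj by simp
qed

(* A > (X \<longrightarrow> Y) follows by OR from the trivial A \<and> \<not> X > (X \<longrightarrow> Y). *)
lemma Cond_cut:
  assumes "Cond A X \<in> x" and "Cond (And A X) Y \<in> x"
  shows "Cond A Y \<in> x"
proof -
  have "Cond (And A X) (Imp X Y) \<in> x" using assms(2) by (rule Cond_mono) simp
  moreover have "Cond (And A (Imp X Bot)) (Imp X Y) \<in> x" using Cond_refl by (rule Cond_mono) simp
  ultimately have "Cond (Or (And A X) (And A (Imp X Bot))) (Imp X Y) \<in> x" by (rule Cond_disj)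
  then have "Cond A (Imp X Y) \<in> x" by (rule Cond_cong_ant) auto
  with assms(1) have "Cond A (And X (Imp X Y)) \<in> x" by (rule Cond_conj)
  then show ?thesis by (rule Cond_mono) simp
qed

lemma Cond_Or_Imp:
  assumes "Cond A B \<in> x"
  shows "Cond (Or A D) (Imp A B) \<in> x"
proof -
  have "Cond A (Imp A B) \<in> x" using assms by (rule Cond_mono) simp
  moreover have "Cond (And D (Imp A Bot)) (Imp A B) \<in> x" using Cond_refl by (rule Cond_mono) simp
  ultimately have "Cond (Or A (And D (Imp A Bot))) (Imp A B) \<in> x" by (rule Cond_disj)
  then show ?thesis by (rule Cond_cong_ant) auto
qed

lemma plaus_le_Cond_Imp:
  assumes "plaus_le x D A" and "Cond A B \<in> x"
  shows "Cond D (Imp A B) \<in> x"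
proof -
  have "Cond (Or D A) (Imp A B) \<in> x" using Cond_Or_Imp[OF assms(2)] by (rule Cond_cong_ant) auto
  with assms(1) have "Cond (And (Or D A) D) (Imp A B) \<in> x"
    unfolding plaus_le_def by (rule Cond_cautious_mono)
  then show ?thesis by (rule Cond_cong_ant) auto
qed

lemma plaus_le_if_Cond_Imp:
  assumes "Cond (Or A D) (Imp A D) \<in> x"
  shows "plaus_le x D A"
proof -
  have "Cond (Or A D) (And (Or A D) (Imp A D)) \<in> x" using Cond_refl assms by (rule Cond_conj)
  then have "Cond (Or A D) D \<in> x" by (rule Cond_mono) auto
  then show ?thesis unfolding plaus_le_def by (rule Cond_cong_ant) auto
qed

lemma plaus_le_Or: "plaus_le x (Or A D) D"
  unfolding plaus_le_def using Cond_refl by (rule Cond_cong_ant) auto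

lemma plaus_le_trans:
  assumes "plaus_le x D B" and "plaus_le x B A"
  shows "plaus_le x D A"
proof -
  let ?T = "Or (Or D B) (Or B A)"
  have "Cond (Or B A) (Or D B) \<in> x" using assms(2) unfolding plaus_le_def by (rule Cond_mono) auto
  with Cond_refl have "Cond ?T (Or D B) \<in> x" by (rule Cond_disj)
  moreover have "Cond (And ?T (Or D B)) D \<in> x"
    using assms(1) unfolding plaus_le_def by (rule Cond_cong_ant) auto
  ultimately have T: "Cond ?T D \<in> x" by (rule Cond_cut)
  then have "Cond ?T (Or D A) \<in> x" by (rule Cond_mono) auto
  then have "Cond (And ?T (Or D A)) D \<in> x" using T by (rule Cond_cautious_mono)
  then show ?thesis unfolding plaus_le_def by (rule Cond_cong_ant) auto
qed

lemma normal_mcs_ant: "k \<in> normal_mcs x A \<Longrightarrow> A \<in> k"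
  using Cond_refl unfolding normal_mcs_def by blast

lemma normal_mcs_avoiding:
  assumes "Cond A C \<notin> x"
  shows "\<exists>k\<in>normal_mcs x A. C \<notin> k"
proof -
  let ?G = "insert (Imp C Bot) {B. Cond A B \<in> x}"
  have "consistent ?G" unfolding consistent_def derivable_def
  proof
    assume "\<exists>L. set L \<subseteq> ?G \<and> PCL (Imp (conjs L) Bot)"
    then obtain L where L: "set L \<subseteq> ?G" "PCL (Imp (conjs L) Bot)" by blast
    let ?L = "filter (\<lambda>B. B \<noteq> Imp C Bot) L"
    have "set ?L \<subseteq> {B. Cond A B \<in> x}" using L(1) by auto
    then have "Cond A (conjs ?L) \<in> x" by (rule Cond_conjs)
    moreover have "PCL (Imp (conjs ?L) C)" using L(2) by (rule PCL_taut_consequence) auto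
    then have "PCL (Imp (Cond A (conjs ?L)) (Cond A C))" by (rule PCL.RCK)
    ultimately have "Cond A C \<in> x" by (rule mcs_PCL_mp[OF mcs_x, rotated])
    with assms show False by blast
  qed
  then obtain k where "mcs k" "?G \<subseteq> k" by (rule lindenbaum)
  then show ?thesis unfolding normal_mcs_def by (auto simp: mcs_Not)
qed

end

section \<open>Neighbourhood semantics\<close>

definition cond_holds :: "('w \<Rightarrow> 'w set set) \<Rightarrow> 'w \<Rightarrow> ('w \<Rightarrow> bool) \<Rightarrow> ('w \<Rightarrow> bool) \<Rightarrow> bool" where
  "cond_holds N x P Q \<longleftrightarrow> (\<forall>\<alpha>\<in>N x. (\<exists>y\<in>\<alpha>. P y) \<longrightarrow>
     (\<exists>\<beta>\<in>N x. \<beta> \<subseteq> \<alpha> \<and> (\<exists>y\<in>\<beta>. P y) \<and> (\<forall>y\<in>\<beta>. P y \<longrightarrow> Q y)))"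

lemma forces_Cond_cond_holds:
  "forces N V x (Cond A B) \<longleftrightarrow> cond_holds N x (\<lambda>y. forces N V y A) (\<lambda>y. forces N V y B)"
  by (simp add: cond_holds_def)

lemma cond_holdsD:
  assumes "cond_holds N x P Q" and "\<alpha> \<in> N x" and "y \<in> \<alpha>" and "P y"
  obtains \<beta> where "\<beta> \<in> N x" "\<beta> \<subseteq> \<alpha>" "\<exists>y\<in>\<beta>. P y" "\<forall>y\<in>\<beta>. P y \<longrightarrow> Q y"
  using assms unfolding cond_holds_def by blast

lemma cond_holds_cong:
  assumes "\<And>y. y \<in> \<Union>(N x) \<Longrightarrow> P y = P' y \<and> Q y = Q' y"
  shows "cond_holds N x P Q \<longleftrightarrow> cond_holds N x P' Q'"
proof -
  have "(\<exists>y\<in>\<alpha>. P y) = (\<exists>y\<in>\<alpha>. P' y)" and "(\<forall>y\<in>\<alpha>. P y \<longrightarrow> Q y) = (\<forall>y\<in>\<alpha>. P' y \<longrightarrow> Q' y)"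
    if "\<alpha> \<in> N x" for \<alpha>
    using assms that by blast+
  then show ?thesis unfolding cond_holds_def by (simp cong: ball_cong_simp bex_cong_simp conj_cong)
qed

definition map_nbhd :: "('v \<Rightarrow> 'w) \<Rightarrow> ('v \<Rightarrow> 'v set set) \<Rightarrow> 'w \<Rightarrow> 'w set set" where
  "map_nbhd f N w = (`) f ` N (inv f w)"

lemma map_nbhd_apply: "inj f \<Longrightarrow> map_nbhd f N (f w) = (`) f ` N w"
  by (simp add: map_nbhd_def)

lemma forces_map_nbhd:
  assumes "inj f"
  shows "forces (map_nbhd f N) (\<lambda>p. f ` V p) (f w) F \<longleftrightarrow> forces N V w F"
proof (induction F arbitrary: w)
  case (Atom p)
  show ?case using assms by (simp add: inj_image_mem_iff)
next
  case (Cond A B)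
  show ?case
    by (simp only: forces.simps map_nbhd_apply[OF assms] ball_simps bex_simps Cond.IH
        inj_image_subset_iff[OF assms])
qed simp_all

lemma nbhd_model_map:
  assumes "inj f" and "nbhd_model W N V"
  shows "nbhd_model (f ` W) (map_nbhd f N) (\<lambda>p. f ` V p)"
  using assms(2) unfolding nbhd_model_def by (auto simp: map_nbhd_apply[OF assms(1)] image_mono)

lemma valid_in_map:
  assumes "inj f"
  shows "valid_in (f ` W) (map_nbhd f N) (\<lambda>p. f ` V p) F \<longleftrightarrow> valid_in W N V F"
  by (simp add: valid_in_def forces_map_nbhd[OF assms])

section \<open>The canonical model\<close>

definition canon_nbhd :: "'a fm set \<Rightarrow> 'a fm set \<Rightarrow> 'a fm \<Rightarrow> ('a fm set \<times> 'a fm) set" where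
  "canon_nbhd x m a = insert (m, a) {(k, d). k \<in> normal_mcs x d \<and> plaus_le x d a \<and> a \<notin> k}"

definition canon_N :: "'a fm set \<times> 'a fm \<Rightarrow> ('a fm set \<times> 'a fm) set set" where
  "canon_N w = {canon_nbhd (fst w) m a | m a. m \<in> normal_mcs (fst w) a}"

definition canon_W :: "('a fm set \<times> 'a fm) set" where
  "canon_W = {w. mcs (fst w)}"

definition canon_V :: "'a \<Rightarrow> ('a fm set \<times> 'a fm) set" where
  "canon_V p = {w \<in> canon_W. Atom p \<in> fst w}"

lemma canon_N_subset: "\<alpha> \<in> canon_N w \<Longrightarrow> \<alpha> \<subseteq> canon_W"
  unfolding canon_N_def canon_nbhd_def canon_W_def normal_mcs_def by auto

lemma canon_N_nonempty: "\<alpha> \<in> canon_N w \<Longrightarrow> \<alpha> \<noteq> {}"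
  unfolding canon_N_def canon_nbhd_def by auto

lemma nbhd_model_canon:
  "(w :: 'a fm set \<times> 'a fm) \<in> canon_W \<Longrightarrow> nbhd_model canon_W canon_N (canon_V :: 'a \<Rightarrow> _)"
  unfolding nbhd_model_def canon_V_def by (auto dest: canon_N_subset canon_N_nonempty)

lemma normal_mcs_Imp:
  assumes "mcs x" and "Cond A B \<in> x" and "plaus_le x D A" and "k \<in> normal_mcs x D" and "A \<in> k"
  shows "B \<in> k"
proof -
  have "Imp A B \<in> k" using plaus_le_Cond_Imp[OF assms(1,3,2)] assms(4) unfolding normal_mcs_def by blast
  with assms(4,5) show ?thesis unfolding normal_mcs_def by (auto simp: mcs_Imp)
qed

lemma canon_nbhd_Cond:
  assumes "mcs x" and "Cond A B \<in> x" and "plaus_le x a A" and "m \<in> normal_mcs x a"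
    and "y \<in> canon_nbhd x m a" and "A \<in> fst y"
  shows "B \<in> fst y"
proof -
  obtain D where D: "plaus_le x D A" "fst y \<in> normal_mcs x D"
    using assms(3-5) plaus_le_trans[OF assms(1) _ assms(3)] unfolding canon_nbhd_def by fastforce
  show ?thesis by (rule normal_mcs_Imp[OF assms(1,2) D assms(6)])
qed

lemma canon_nbhd_refine:
  assumes "mcs x" and "Cond A B \<in> x" and "Cond (Or A a) (Imp A a) \<notin> x"
  obtains \<beta> where "\<beta> \<in> canon_N (x, t)" and "\<beta> \<subseteq> canon_nbhd x m a"
    and "\<exists>y\<in>\<beta>. A \<in> fst y" and "\<forall>y\<in>\<beta>. A \<in> fst y \<longrightarrow> B \<in> fst y"
proof -
  obtain k where k: "k \<in> normal_mcs x (Or A a)" "Imp A a \<notin> k"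
    using normal_mcs_avoiding[OF assms(1,3)] by blast
  have "mcs k" using k(1) unfolding normal_mcs_def by blast
  with k(2) have "A \<in> k" and "a \<notin> k" by (auto simp: mcs_Imp)
  let ?\<beta> = "canon_nbhd x k (Or A a)"
  have "?\<beta> \<in> canon_N (x, t)" using k(1) unfolding canon_N_def by auto
  moreover have "?\<beta> \<subseteq> canon_nbhd x m a"
    using k(1) \<open>a \<notin> k\<close> plaus_le_Or[OF assms(1)] plaus_le_trans[OF assms(1) _ plaus_le_Or[OF assms(1)]]
    unfolding canon_nbhd_def normal_mcs_def by (auto simp: mcs_Or)
  moreover have "\<exists>y\<in>?\<beta>. A \<in> fst y" using \<open>A \<in> k\<close> unfolding canon_nbhd_def by auto
  moreover have "Imp A B \<in> k" using Cond_Or_Imp[OF assms(1,2)] k(1) unfolding normal_mcs_def by blast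
  then have "\<forall>y\<in>?\<beta>. A \<in> fst y \<longrightarrow> B \<in> fst y"
    using \<open>mcs k\<close> unfolding canon_nbhd_def normal_mcs_def by (auto simp: mcs_Imp mcs_Or)
  ultimately show ?thesis by (rule that)
qed

lemma Cond_imp_cond_holds:
  assumes "mcs x" and "Cond A B \<in> x"
  shows "cond_holds canon_N (x, t) (\<lambda>y. A \<in> fst y) (\<lambda>y. B \<in> fst y)"
  unfolding cond_holds_def
proof (intro ballI impI)
  fix \<alpha> assume "\<alpha> \<in> canon_N (x, t)" and "\<exists>y\<in>\<alpha>. A \<in> fst y"
  then obtain m a where \<alpha>: "\<alpha> = canon_nbhd x m a" and m: "m \<in> normal_mcs x a"
    unfolding canon_N_def by auto
  show "\<exists>\<beta>\<in>canon_N (x, t). \<beta> \<subseteq> \<alpha> \<and> (\<exists>y\<in>\<beta>. A \<in> fst y) \<and> (\<forall>y\<in>\<beta>. A \<in> fst y \<longrightarrow> B \<in> fst y)"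
  proof (cases "Cond (Or A a) (Imp A a) \<in> x")
    case True
    then have "plaus_le x a A" by (rule plaus_le_if_Cond_Imp[OF assms(1)])
    then have "\<forall>y\<in>\<alpha>. A \<in> fst y \<longrightarrow> B \<in> fst y"
      using canon_nbhd_Cond[OF assms] m unfolding \<alpha> by blast
    with \<open>\<alpha> \<in> canon_N (x, t)\<close> \<open>\<exists>y\<in>\<alpha>. A \<in> fst y\<close> show ?thesis by blast
  next
    case False
    obtain \<beta> where "\<beta> \<in> canon_N (x, t)" "\<beta> \<subseteq> \<alpha>"
      "\<exists>y\<in>\<beta>. A \<in> fst y" "\<forall>y\<in>\<beta>. A \<in> fst y \<longrightarrow> B \<in> fst y"
      using canon_nbhd_refine[OF assms False] unfolding \<alpha> by blast
    then show ?thesis by blast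
  qed
qed

lemma cond_holds_imp_Cond:
  assumes "mcs x" and "cond_holds canon_N (x, t) (\<lambda>y. A \<in> fst y) (\<lambda>y. B \<in> fst y)"
  shows "Cond A B \<in> x"
proof (rule ccontr)
  assume "Cond A B \<notin> x"
  then obtain m where m: "m \<in> normal_mcs x A" "B \<notin> m"
    using normal_mcs_avoiding[OF assms(1)] by blast
  let ?\<alpha> = "canon_nbhd x m A"
  have "?\<alpha> \<in> canon_N (x, t)" using m(1) unfolding canon_N_def by auto
  moreover have "(m, A) \<in> ?\<alpha>" unfolding canon_nbhd_def by simp
  moreover have "A \<in> fst (m, A)" using normal_mcs_ant[OF assms(1) m(1)] by simp
  ultimately obtain \<beta> where "\<beta> \<subseteq> ?\<alpha>" "\<exists>y\<in>\<beta>. A \<in> fst y" "\<forall>y\<in>\<beta>. A \<in> fst y \<longrightarrow> B \<in> fst y"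
    by (blast elim: cond_holdsD[OF assms(2)])
  then obtain y where "y \<in> ?\<alpha>" "A \<in> fst y" "B \<in> fst y" by blast
  then have "y = (m, A)" unfolding canon_nbhd_def by auto
  with \<open>B \<in> fst y\<close> m(2) show False by simp
qed

lemma canon_truth:
  assumes "w \<in> canon_W"
  shows "forces canon_N canon_V w F \<longleftrightarrow> F \<in> fst w"
  using assms
proof (induction F arbitrary: w)
  case (Atom p)
  then show ?case by (simp add: canon_V_def)
next
  case Bot
  then show ?case by (simp add: canon_W_def mcs_Bot)
next
  case (And A B)
  then show ?case by (simp add: canon_W_def mcs_And)
next
  case (Or A B)
  then show ?case by (simp add: canon_W_def mcs_Or)
next
  case (Imp A B)
  then show ?case by (simp add: canon_W_def mcs_Imp)
next
  case (Cond A B)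
  obtain x t where w: "w = (x, t)" by fastforce
  with Cond.prems have "mcs x" by (simp add: canon_W_def)
  have "forces canon_N canon_V w (Cond A B) \<longleftrightarrow>
      cond_holds canon_N w (\<lambda>y. A \<in> fst y) (\<lambda>y. B \<in> fst y)"
    unfolding forces_Cond_cond_holds using Cond.IH canon_N_subset
    by (intro cond_holds_cong) blast
  also have "\<dots> \<longleftrightarrow> Cond A B \<in> fst w"
    using Cond_imp_cond_holds cond_holds_imp_Cond \<open>mcs x\<close> unfolding w by auto
  finally show ?case .
qed

lemma canon_refutes:
  assumes "\<not> PCL F"
  obtains w where "w \<in> canon_W" and "\<not> forces canon_N canon_V w F"
proof -
  obtain G where "mcs G" "F \<notin> G" using mcs_refuting[OF assms] by blast
  then have "(G, Bot) \<in> canon_W" "\<not> forces canon_N canon_V (G, Bot) F"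
    using canon_truth[of "(G, Bot)"] by (auto simp: canon_W_def)
  then show ?thesis by (rule that)
qed

(* The hypothesis of completeness only concerns models whose worlds are sets of formulas; in the
   image, tags and members are told apart by the shapes Or d d and And X X. *)
definition enc :: "'a fm set \<times> 'a fm \<Rightarrow> 'a fm set" where
  "enc w = insert (Or (snd w) (snd w)) ((\<lambda>X. And X X) ` fst w)"

lemma inj_enc: "inj enc"
proof (rule injI)
  fix u w :: "'a fm set \<times> 'a fm"
  assume "enc u = enc w"
  then have "Or d d \<in> enc u \<longleftrightarrow> Or d d \<in> enc w" and "And X X \<in> enc u \<longleftrightarrow> And X X \<in> enc w"
    for d X by simp_all
  then have "snd u = snd w" and "fst u = fst w" unfolding enc_def by auto
  then show "u = w" by (simp add: prod_eq_iff)
qed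

theorem mainTheorem2:
  fixes F :: "'a fm"
  assumes "\<And>(W :: 'a fm set set) N V. nbhd_model W N V \<Longrightarrow> valid_in W N V F"
  shows "PCL F"
proof (rule ccontr)
  assume "\<not> PCL F"
  then obtain w where w: "w \<in> canon_W" and refuted: "\<not> forces canon_N canon_V w F"
    by (rule canon_refutes)
  have "nbhd_model (enc ` canon_W) (map_nbhd enc canon_N) (\<lambda>p :: 'a. enc ` canon_V p)"
    by (intro nbhd_model_map inj_enc nbhd_model_canon[OF w])
  then have "valid_in (enc ` canon_W) (map_nbhd enc canon_N) (\<lambda>p. enc ` canon_V p) F"
    by (rule assms)
  then have "valid_in canon_W canon_N canon_V F" by (simp add: valid_in_map[OF inj_enc])
  with w refuted show False by (simp add: valid_in_def)
qed

end
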